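(* Suppose $K\in\mathbb{K}$ and let $K'=K-2\eta\,(R+B^T\mathcal{E}(P^K)B)^{-1}L^K$, i.e. $K_i'=K_i-2\eta(R_i+B_i^T\mathcal{E}_i(P^K)B_i)^{-1}L_i^K$ for each $i$. If $0<\eta\le\frac12$, then $K'\in\mathbb{K}$.
   Context: Let $N_s\ge 1$, $\Omega=\{1,\dots,N_s\}$; tuples $V=(V_1,\dots,V_{N_s})$ of matrices are combined componentwise. Markovian jump linear system: $x_{t+1}=A_{\omega(t)}x_t+B_{\omega(t)}u_t$, $A_i\in\mathbb{R}^{d\times d}$, $B_i\in\mathbb{R}^{d\times k}$; $\{\omega(t)\}$ is a time-homogeneous Markov chain on $\Omega$ with transition probabilities $p_{ij}$ and initial distribution $\pi$ with $\pi_i>0$; $x_0$ is random, independent of the chain, with $\mathbb{E}[x_0x_0^T]\succ0$. The system is mean-square stabilizable. $Q=(Q_i)\succ0$, $R=(R_i)\succ0$. For $K=(K_i)$, $K_i\in\mathbb{R}^{k\times d}$, $u_t=-K_{\omega(t)}x_t$ and $C(K)=\mathbb{E}[\sum_{t\ge0}x_t^TQ_{\omega(t)}x_t+u_t^TR_{\omega(t)}u_t]$. $\mathbb{K}$ is the set of $K$ making the closed loop $x_{t+1}=(A_{\omega(t)}-B_{\omega(t)}K_{\omega(t)})x_t$ mean-square stable ($\mathbb{E}[x_tx_t^T]\to0$ for all initial conditions). $\mathcal{E}_i(V)=\sum_jp_{ij}V_j$. For $K\in\mathbb{K}$, $P^K$ is the unique solution of $P_i^K=Q_i+K_i^TR_iK_i+(A_i-B_iK_i)^T\mathcal{E}_i(P^K)(A_i-B_iK_i)$,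 and $L_i^K=(R_i+B_i^T\mathcal{E}_i(P^K)B_i)K_i-B_i^T\mathcal{E}_i(P^K)A_i$. *)

theory Defs
  imports "HOL-Analysis.Analysis"
begin

text \<open>Modes are the elements of a finite type 'm
(playing the role of Omega = {1..N_s}); the state dimension d is the finite type 'd,
the input dimension k is the finite type 'k.\<close>

definition psd :: "real^'n^'n \<Rightarrow> bool" where
  "psd M \<longleftrightarrow> transpose M = M \<and> (\<forall>x. 0 \<le> x \<bullet> (M *v x))"

definition pd :: "real^'n^'n \<Rightarrow> bool" where
  "pd M \<longleftrightarrow> transpose M = M \<and> (\<forall>x. x \<noteq> 0 \<longrightarrow> 0 < x \<bullet> (M *v x))"

definition stochastic :: "('m::finite \<Rightarrow> 'm \<Rightarrow> real) \<Rightarrow> bool" where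
  "stochastic p \<longleftrightarrow> (\<forall>i j. 0 \<le> p i j) \<and> (\<forall>i. (\<Sum>j\<in>UNIV. p i j) = 1)"

definition Eop :: "('m::finite \<Rightarrow> 'm \<Rightarrow> real) \<Rightarrow> ('m \<Rightarrow> real^'n^'n) \<Rightarrow> 'm \<Rightarrow> real^'n^'n" where
  "Eop p V i = (\<Sum>j\<in>UNIV. p i j *\<^sub>R V j)"

definition Acl :: "('m \<Rightarrow> real^'d^'d) \<Rightarrow> ('m \<Rightarrow> real^'k^'d) \<Rightarrow> ('m \<Rightarrow> real^'d^'k) \<Rightarrow> 'm \<Rightarrow> real^'d^'d" where
  "Acl A B K i = A i - B i ** K i"

text \<open>Second moments X_j(t) = E[x_t x_t^T 1{omega(t) = j}] of the closed loop
x_{t+1} = (A_{omega(t)} - B_{omega(t)} K_{omega(t)}) x_t, given their initial values X0.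
By the Markov property: X_j(t+1) = sum_i p_ij (A_i - B_i K_i) X_i(t) (A_i - B_i K_i)^T,
and E[x_t x_t^T] = sum_j X_j(t).\<close>
primrec moment :: "('m::finite \<Rightarrow> 'm \<Rightarrow> real) \<Rightarrow> ('m \<Rightarrow> real^'d^'d) \<Rightarrow> ('m \<Rightarrow> real^'k^'d)
    \<Rightarrow> ('m \<Rightarrow> real^'d^'k) \<Rightarrow> ('m \<Rightarrow> real^'d^'d) \<Rightarrow> nat \<Rightarrow> 'm \<Rightarrow> real^'d^'d" where
  "moment p A B K X0 0 = X0"
| "moment p A B K X0 (Suc t) = (\<lambda>j. \<Sum>i\<in>UNIV. p i j *\<^sub>R
      (Acl A B K i ** moment p A B K X0 t i ** transpose (Acl A B K i)))"

text \<open>Mean-square stability of the closed loop: E[x_t x_t^T] -> 0 for every initial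
condition, i.e. for every joint law of (x_0, omega(0)), i.e. every tuple of psd initial
second moments X0_i = E[x_0 x_0^T 1{omega(0)=i}].  The set \<open>\<bbbK>\<close> of the paper is
{K. ms_stable p A B K}.\<close>
definition ms_stable :: "('m::finite \<Rightarrow> 'm \<Rightarrow> real) \<Rightarrow> ('m \<Rightarrow> real^'d^'d) \<Rightarrow> ('m \<Rightarrow> real^'k^'d)
    \<Rightarrow> ('m \<Rightarrow> real^'d^'k) \<Rightarrow> bool" where
  "ms_stable p A B K \<longleftrightarrow>
     (\<forall>X0. (\<forall>i. psd (X0 i)) \<longrightarrow> ((\<lambda>t. \<Sum>i\<in>UNIV. moment p A B K X0 t i) \<longlonglongrightarrow> 0))"

text \<open>P^K: the (unique, for K mean-square stabilizing) solution of the coupled Lyapunov equation.\<close>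
definition PK :: "('m::finite \<Rightarrow> 'm \<Rightarrow> real) \<Rightarrow> ('m \<Rightarrow> real^'d^'d) \<Rightarrow> ('m \<Rightarrow> real^'k^'d)
    \<Rightarrow> ('m \<Rightarrow> real^'d^'d) \<Rightarrow> ('m \<Rightarrow> real^'k^'k) \<Rightarrow> ('m \<Rightarrow> real^'d^'k) \<Rightarrow> 'm \<Rightarrow> real^'d^'d" where
  "PK p A B Q R K = (THE P. \<forall>i. P i = Q i + transpose (K i) ** R i ** K i
      + transpose (Acl A B K i) ** Eop p P i ** Acl A B K i)"

definition LK :: "('m::finite \<Rightarrow> 'm \<Rightarrow> real) \<Rightarrow> ('m \<Rightarrow> real^'d^'d) \<Rightarrow> ('m \<Rightarrow> real^'k^'d)
    \<Rightarrow> ('m \<Rightarrow> real^'d^'d) \<Rightarrow> ('m \<Rightarrow> real^'k^'k) \<Rightarrow> ('m \<Rightarrow> real^'d^'k) \<Rightarrow> 'm \<Rightarrow> real^'d^'k" where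
  "LK p A B Q R K i =
     (R i + transpose (B i) ** Eop p (PK p A B Q R K) i ** B i) ** K i
     - transpose (B i) ** Eop p (PK p A B Q R K) i ** A i"

end

(* Write T_M(Y)_i = M_i^T E_i(Y) M_i (lyap_op) for the adjoint of the second-moment recursion of
   the closed loop M = A - B K.  Mean-square stability of M is equivalent to T_M^n(I) -> 0, and
   then P^K is the unique solution of P = Q + K^T R K + T_M(P); it is positive semidefinite.

   Fix a mode i and a state x, and put E = E_i(P^K), G = R_i + B_i^T E B_i.  Completing the square,
   the cost u |-> u^T R_i u + (A_i x - B_i u)^T E (A_i x - B_i u) equals (u - y)^T G (u - y) + const
   with y = G^-1 B_i^T E A_i x, and the new gain satisfies K'_i x - y = (1 - 2 eta) (K_i x - y).
   So the cost does not increase, which gives T_M'(P^K) <= P^K - Q for M' = A - B K'.  As Q is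
   positive definite, this is a contraction T_M'(P^K) <= r P^K with r < 1, hence
   T_M'^n(I) <= c r^n P^K -> 0 and K' is mean-square stabilizing. *)

theory Submission
  imports Defs
begin

lemma inner_transpose_matrix_vector: "inner (a::real^'n) (transpose M *v w) = inner (M *v a) w"
  by (metis dot_lmul_matrix inner_commute transpose_matrix_vector)

lemma inner_transpose_sandwich:
  "inner a ((transpose F ** (S::real^_^_) ** F) *v b) = inner (F *v a) (S *v (F *v b))"
  by (simp only: matrix_vector_mul_assoc[symmetric]) (rule inner_transpose_matrix_vector)

lemma inner_symmetric_matrix: "transpose S = S \<Longrightarrow> inner x ((S::real^'n^'n) *v y) = inner y (S *v x)"
  by (metis inner_commute inner_transpose_matrix_vector)

lemma matrix_entry_eq_inner_axis: "(Z::real^'n^'m) $ r $ s = inner (axis r 1) (Z *v axis s 1)"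
proof -
  have "inner (axis r 1) (Z *v axis s 1) = (Z *v axis s 1) $ r" by (simp add: inner_axis')
  also have "\<dots> = Z $ r $ s"
    by (simp add: matrix_vector_mult_def axis_def if_distrib if_distribR cong: if_cong)
  finally show ?thesis by simp
qed

lemma matrix_eq_0_if_inner_eq_0:
  assumes "\<And>a b. inner a ((Z::real^'n^'m) *v b) = 0"
  shows "Z = 0"
  using assms by (simp add: vec_eq_iff matrix_entry_eq_inner_axis)

lemma matrix_tendsto_0_if_inner_tendsto_0:
  assumes "\<And>a b. (\<lambda>n. inner a ((Z n :: real^'n^'m) *v b)) \<longlonglongrightarrow> 0"
  shows "Z \<longlonglongrightarrow> 0"
proof (intro vec_tendstoI)
  fix r s
  show "(\<lambda>n. Z n $ r $ s) \<longlonglongrightarrow> 0 $ r $ s"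
    unfolding matrix_entry_eq_inner_axis using assms by simp
qed

lemma matrix_add_rdistrib: "(B + C) ** A = B ** A + C ** (A::'a::semiring_1^_^_)"
  by (vector matrix_matrix_mult_def sum.distrib[symmetric] field_simps)

lemma matrix_diff_ldistrib: "(A::'a::ring_1^_^_) ** (B - C) = A ** B - A ** C"
  by (vector matrix_matrix_mult_def sum_subtractf[symmetric] field_simps)

lemma matrix_diff_rdistrib: "(B - C) ** A = B ** A - C ** (A::'a::ring_1^_^_)"
  by (vector matrix_matrix_mult_def sum_subtractf[symmetric] field_simps)

lemma transpose_add: "transpose (A + B) = transpose A + transpose (B::'a::semiring_1^_^_)"
  by (simp add: transpose_def vec_eq_iff)

lemma transpose_zero: "transpose (0::'a::semiring_1^'n^'m) = 0"
  by (simp add: transpose_def vec_eq_iff)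

lemma matrix_mult_sum_scaleR:
  "finite S \<Longrightarrow> (A::real^'n^'m) ** (\<Sum>j\<in>S. c j *\<^sub>R Y j) ** B = (\<Sum>j\<in>S. c j *\<^sub>R (A ** Y j ** B))"
  by (induction S rule: finite_induct)
    (simp_all add: matrix_add_ldistrib matrix_add_rdistrib matrix_scalar_ac scalar_matrix_assoc[symmetric])

lemma trace_transpose_mult: "trace (transpose (Y::real^'n^'n) ** Z) = (\<Sum>k\<in>UNIV. \<Sum>l\<in>UNIV. Y$l$k * Z$l$k)"
  by (simp add: trace_def matrix_matrix_mult_def transpose_def)

lemma trace_transpose_mult_commute: "trace (transpose (Y::real^'n^'n) ** Z) = trace (transpose Z ** Y)"
  by (simp add: trace_transpose_mult mult.commute)

lemma trace_transpose_mult_sum: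
  "trace (transpose (Y::real^'n^'n) ** (\<Sum>j\<in>S. c j *\<^sub>R Z j)) = (\<Sum>j\<in>S. c j * trace (transpose Y ** Z j))"
proof -
  have "(\<Sum>k\<in>UNIV. \<Sum>l\<in>UNIV. Y$l$k * (\<Sum>j\<in>S. c j * Z j $l$k))
      = (\<Sum>k\<in>UNIV. \<Sum>l\<in>UNIV. \<Sum>j\<in>S. c j * (Y$l$k * Z j $l$k))"
    by (simp add: sum_distrib_left mult.left_commute)
  also have "\<dots> = (\<Sum>k\<in>UNIV. \<Sum>j\<in>S. \<Sum>l\<in>UNIV. c j * (Y$l$k * Z j $l$k))"
    by (rule sum.cong[OF refl], rule sum.swap)
  also have "\<dots> = (\<Sum>j\<in>S. \<Sum>k\<in>UNIV. \<Sum>l\<in>UNIV. c j * (Y$l$k * Z j $l$k))"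
    by (rule sum.swap)
  finally show ?thesis by (simp add: trace_transpose_mult sum_distrib_left)
qed

lemma trace_transpose_sum_mult:
  "trace (transpose (\<Sum>j\<in>S. c j *\<^sub>R Y j) ** (Z::real^'n^'n)) = (\<Sum>j\<in>S. c j * trace (transpose (Y j) ** Z))"
proof -
  have "trace (transpose (\<Sum>j\<in>S. c j *\<^sub>R Y j) ** Z) = trace (transpose Z ** (\<Sum>j\<in>S. c j *\<^sub>R Y j))"
    by (rule trace_transpose_mult_commute)
  also have "\<dots> = (\<Sum>j\<in>S. c j * trace (transpose Z ** Y j))" by (rule trace_transpose_mult_sum)
  finally show ?thesis by (simp add: trace_transpose_mult_commute[of Z])
qed

lemma trace_transpose_mult_congruence:
  "trace (transpose Y ** (M ** X ** transpose M)) = trace (transpose (transpose M ** Y ** (M::real^'n^'n)) ** X)"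
proof -
  have "trace (transpose Y ** (M ** X ** transpose M)) = trace ((transpose Y ** M ** X) ** transpose M)"
    by (simp add: matrix_mul_assoc)
  also have "\<dots> = trace (transpose M ** (transpose Y ** M ** X))" by (rule trace_mul_sym)
  finally show ?thesis by (simp add: matrix_transpose_mul matrix_mul_assoc)
qed

lemma trace_sum: "trace (\<Sum>j\<in>S. (X j::real^'n^'n)) = (\<Sum>j\<in>S. trace (X j))"
  unfolding trace_def by (simp add: sum.swap[of _ S])

lemma tendsto_trace_0: "S \<longlonglongrightarrow> (0::real^'n^'n) \<Longrightarrow> (\<lambda>t. trace (S t)) \<longlonglongrightarrow> 0"
  unfolding trace_def by (intro tendsto_null_sum tendsto_vec_nth[where a=0, simplified])

lemma matrix_inner_bound:
  "\<exists>C\<ge>0. \<forall>i a b. \<bar>inner a ((Y::'m::finite \<Rightarrow> real^'n^'n) i *v b)\<bar> \<le> C * (inner a a + inner b b)"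
proof -
  have "\<forall>i. \<exists>N>0. \<forall>x. norm (Y i *v x) \<le> norm x * N"
    using bounded_linear.pos_bounded[OF matrix_vector_mul_bounded_linear] by blast
  then obtain N where N: "\<And>i. N i > 0" "\<And>i x. norm (Y i *v x) \<le> norm x * N i"
    by metis
  define C where "C = (\<Sum>i\<in>UNIV. N i)"
  have "N i \<le> C" for i
    unfolding C_def by (rule member_le_sum) (auto intro: less_imp_le N(1))
  have "\<bar>inner a (Y i *v b)\<bar> \<le> C * (inner a a + inner b b)" for i a b
  proof -
    have "\<bar>inner a (Y i *v b)\<bar> \<le> norm a * (norm b * N i)"
      by (rule order_trans[OF Cauchy_Schwarz_ineq2]) (simp add: N(2) mult_left_mono)
    also have "\<dots> \<le> (norm a ^ 2 + norm b ^ 2) * N i"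
    proof -
      have "norm a * norm b \<le> norm a ^ 2 + norm b ^ 2"
        using sum_squares_bound[of "norm a" "norm b"] mult_nonneg_nonneg[OF norm_ge_zero norm_ge_zero, of a b]
        by linarith
      then show ?thesis using N(1)[of i] by (simp add: mult.assoc[symmetric] mult_right_mono)
    qed
    also have "\<dots> \<le> (norm a ^ 2 + norm b ^ 2) * C"
      using \<open>N i \<le> C\<close> by (simp add: mult_left_mono)
    finally show ?thesis by (simp add: power2_norm_eq_inner mult.commute)
  qed
  moreover have "C \<ge> 0" unfolding C_def using N(1) by (simp add: sum_nonneg less_imp_le)
  ultimately show ?thesis by blast
qed

lemma pd_imp_psd: "pd S \<Longrightarrow> psd S"
  unfolding pd_def psd_def by (metis inner_zero_left order.refl order_less_imp_le)

lemma psd_0: "psd (0::real^'n^'n)"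
  by (simp add: psd_def transpose_zero)

lemma psd_mat_1: "psd (mat 1 :: real^'n^'n)"
  by (simp add: psd_def)

lemma psd_add: "psd S \<Longrightarrow> psd T \<Longrightarrow> psd (S + T)"
  by (simp add: psd_def transpose_add matrix_vector_mult_add_rdistrib inner_add_right)

lemma pd_add_psd: "pd S \<Longrightarrow> psd T \<Longrightarrow> pd (S + T)"
  unfolding pd_def psd_def
  by (simp add: transpose_add matrix_vector_mult_add_rdistrib inner_add_right add_pos_nonneg)

lemma psd_congruence: "psd S \<Longrightarrow> psd (transpose F ** S ** F)"
  by (simp add: psd_def inner_transpose_sandwich matrix_transpose_mul matrix_mul_assoc)

lemma psd_outer_prod: "psd (\<chi> r s. a$r * a$s)"
proof -
  have "(\<chi> r s. a$r * a$s) *v x = inner a x *\<^sub>R a" for x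
    by (simp add: matrix_vector_mult_def vec_eq_iff inner_vec_def sum_distrib_left mult_ac)
  moreover have "transpose (\<chi> r s. a$r * a$s) = (\<chi> r s. a$r * a$s)"
    by (simp add: transpose_def vec_eq_iff mult.commute)
  ultimately show ?thesis
    by (simp add: psd_def inner_commute)
qed

lemma pd_invertible:
  fixes G :: "real^'n^'n"
  assumes "pd G"
  shows "G ** matrix_inv G = mat 1" and "matrix_inv G ** G = mat 1"
proof -
  have "G *v u = 0 \<Longrightarrow> u = 0" for u
    using assms unfolding pd_def by (metis inner_zero_right order.irrefl)
  then have "invertible G"
    using matrix_left_invertible_ker invertible_left_inverse by blast
  then have "\<exists>G'. G ** G' = mat 1 \<and> G' ** G = mat 1" by (simp add: invertible_def)
  then have "G ** matrix_inv G = mat 1 \<and> matrix_inv G ** G = mat 1"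
    unfolding matrix_inv_def by (rule someI_ex)
  then show "G ** matrix_inv G = mat 1" and "matrix_inv G ** G = mat 1" by simp_all
qed

lemma pd_lower_bound:
  fixes S :: "real^'n^'n"
  assumes "pd S"
  shows "\<exists>q>0. \<forall>a. q * inner a a \<le> inner a (S *v a)"
proof -
  have "sphere (0::real^'n) 1 \<noteq> {}"
    using norm_axis_1 by (metis mem_sphere_0 empty_iff)
  moreover have "continuous_on (sphere 0 1) (\<lambda>a::real^'n. inner a (S *v a))"
    by (intro continuous_intros linear_continuous_on matrix_vector_mul_bounded_linear)
  ultimately obtain u where u: "u \<in> sphere 0 1" "\<And>v. v \<in> sphere 0 1 \<Longrightarrow> inner u (S *v u) \<le> inner v (S *v v)"
    using continuous_attains_inf[OF compact_sphere] by blast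
  have "inner u (S *v u) * inner a a \<le> inner a (S *v a)" for a
  proof (cases "a = 0")
    case False
    define v where "v = (1 / norm a) *\<^sub>R a"
    have a: "a = norm a *\<^sub>R v" using False by (simp add: v_def)
    have "inner a (S *v a) = inner v (S *v v) * (norm a)\<^sup>2"
      by (subst (1 2) a) (simp add: matrix_vector_mult_scaleR power2_eq_square)
    moreover have "v \<in> sphere 0 1" using False by (simp add: v_def)
    ultimately show ?thesis
      using u(2) by (simp add: power2_norm_eq_inner[symmetric] mult_right_mono)
  qed simp
  moreover have "inner u (S *v u) > 0"
    using assms u(1) unfolding pd_def by (metis mem_sphere_0 norm_zero zero_neq_one)
  ultimately show ?thesis by blast
qed

lemma pd_uniform_lower_bound:
  fixes Q :: "'m::finite \<Rightarrow> real^'n^'n"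
  assumes "\<forall>i. pd (Q i)"
  shows "\<exists>q>0. \<forall>i a. q * inner a a \<le> inner a (Q i *v a)"
proof -
  have "\<forall>i. \<exists>q>0. \<forall>a. q * inner a a \<le> inner a (Q i *v a)"
    using assms pd_lower_bound by blast
  then obtain q where q: "\<And>i. q i > 0" "\<And>i a. q i * inner a a \<le> inner a (Q i *v a)"
    by metis
  have "Min (range q) * inner a a \<le> inner a (Q i *v a)" for i a
    by (rule order_trans[OF mult_right_mono q(2)]) simp_all
  moreover have "Min (range q) > 0" using q(1) by simp
  ultimately show ?thesis by blast
qed

lemma Eop_mult_vec: "Eop p Y i *v v = (\<Sum>j\<in>UNIV. p i j *\<^sub>R (Y j *v v))"
proof -
  have "(\<Sum>k\<in>UNIV. (\<Sum>j\<in>UNIV. p i j * Y j $ r $ k) * v $ k)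
      = (\<Sum>j\<in>UNIV. p i j * (\<Sum>k\<in>UNIV. Y j $ r $ k * v $ k))" for r
    by (simp add: sum_distrib_left sum_distrib_right mult.assoc) (rule sum.swap)
  then show ?thesis by (simp add: Eop_def vec_eq_iff matrix_vector_mult_def)
qed

lemma Eop_diff: "Eop p (\<lambda>j. Y j - Z j) i = Eop p Y i - Eop p Z i"
  by (simp add: Eop_def scaleR_diff_right sum_subtractf)

lemma Eop_add: "Eop p (\<lambda>j. Y j + Z j) i = Eop p Y i + Eop p Z i"
  by (simp add: Eop_def scaleR_add_right sum.distrib)

lemma Eop_scaleR: "Eop p (\<lambda>j. c *\<^sub>R Y j) i = c *\<^sub>R Eop p Y i"
  by (simp add: Eop_def scaleR_sum_right mult.commute)

lemma transpose_Eop: "transpose (Eop p Y i) = Eop p (\<lambda>j. transpose (Y j)) i"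
  by (simp add: transpose_def vec_eq_iff Eop_def)

lemma psd_Eop:
  assumes "\<forall>i j. 0 \<le> p i j" and "\<forall>j. psd (Y j)"
  shows "psd (Eop p Y i)"
  using assms by (simp add: psd_def transpose_Eop Eop_mult_vec inner_sum_right sum_nonneg)

text \<open>For the closed loop \<open>M = Acl A B K\<close>, \<open>moment_op p M\<close> is the recursion of \<open>moment\<close> and
\<open>lyap_op p M\<close> the operator of the coupled Lyapunov equation defining \<open>PK\<close>;
\<open>lyap_decays p M\<close> is the dual form of mean-square stability.\<close>

definition lyap_op :: "('m::finite \<Rightarrow> 'm \<Rightarrow> real) \<Rightarrow> ('m \<Rightarrow> real^'n^'n)
    \<Rightarrow> ('m \<Rightarrow> real^'n^'n) \<Rightarrow> 'm \<Rightarrow> real^'n^'n" where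
  "lyap_op p M Y i = transpose (M i) ** Eop p Y i ** M i"

definition moment_op :: "('m::finite \<Rightarrow> 'm \<Rightarrow> real) \<Rightarrow> ('m \<Rightarrow> real^'n^'n)
    \<Rightarrow> ('m \<Rightarrow> real^'n^'n) \<Rightarrow> 'm \<Rightarrow> real^'n^'n" where
  "moment_op p M X = (\<lambda>j. \<Sum>i\<in>UNIV. p i j *\<^sub>R (M i ** X i ** transpose (M i)))"

definition trace_pair :: "('m::finite \<Rightarrow> real^'n^'n) \<Rightarrow> ('m \<Rightarrow> real^'n^'n) \<Rightarrow> real" where
  "trace_pair Y X = (\<Sum>i\<in>UNIV. trace (transpose (Y i) ** X i))"

definition lyap_decays :: "('m::finite \<Rightarrow> 'm \<Rightarrow> real) \<Rightarrow> ('m \<Rightarrow> real^'n^'n) \<Rightarrow> bool" where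
  "lyap_decays p M \<longleftrightarrow> (\<forall>i a. (\<lambda>n. inner a ((lyap_op p M ^^ n) (\<lambda>_. mat 1) i *v a)) \<longlonglongrightarrow> 0)"

lemma inner_lyap_op:
  "inner a (lyap_op p M Y i *v b) = (\<Sum>j\<in>UNIV. p i j * inner (M i *v a) (Y j *v (M i *v b)))"
  by (simp add: lyap_op_def inner_transpose_sandwich Eop_mult_vec inner_sum_right)

lemma lyap_op_add: "lyap_op p M (\<lambda>j. Y j + Z j) i = lyap_op p M Y i + lyap_op p M Z i"
  by (simp add: lyap_op_def Eop_add matrix_add_ldistrib matrix_add_rdistrib)

lemma lyap_op_diff: "lyap_op p M (\<lambda>j. Y j - Z j) i = lyap_op p M Y i - lyap_op p M Z i"
  by (simp add: lyap_op_def Eop_diff matrix_diff_ldistrib matrix_diff_rdistrib)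

lemma lyap_op_scaleR: "lyap_op p M (\<lambda>j. c *\<^sub>R Y j) i = c *\<^sub>R lyap_op p M Y i"
  by (simp add: lyap_op_def Eop_scaleR matrix_scalar_ac scalar_matrix_assoc[symmetric])

lemma transpose_lyap_op: "transpose (lyap_op p M Y i) = lyap_op p M (\<lambda>j. transpose (Y j)) i"
  by (simp add: lyap_op_def matrix_transpose_mul matrix_mul_assoc transpose_Eop)

lemma psd_lyap_op: "\<forall>i j. 0 \<le> p i j \<Longrightarrow> \<forall>j. psd (Y j) \<Longrightarrow> psd (lyap_op p M Y i)"
  unfolding lyap_op_def by (intro psd_congruence psd_Eop)

lemma moment_eq_moment_op_iter: "moment p A B K X0 t = (moment_op p (Acl A B K) ^^ t) X0"
  by (induction t) (simp_all add: moment_op_def)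

lemma trace_pair_commute: "trace_pair Y X = trace_pair X Y"
  unfolding trace_pair_def by (simp add: trace_transpose_mult_commute)

lemma trace_pair_moment_op: "trace_pair Y (moment_op p M X) = trace_pair (lyap_op p M Y) X"
proof -
  have "trace_pair Y (moment_op p M X)
      = (\<Sum>i\<in>UNIV. \<Sum>j\<in>UNIV. p i j * trace (transpose (transpose (M i) ** Y j ** M i) ** X i))"
    unfolding trace_pair_def moment_op_def
    by (subst sum.swap) (simp add: trace_transpose_mult_sum trace_transpose_mult_congruence)
  also have "\<dots> = trace_pair (lyap_op p M Y) X"
  proof -
    have "lyap_op p M Y i = (\<Sum>j\<in>UNIV. p i j *\<^sub>R (transpose (M i) ** Y j ** M i))" for i
      unfolding lyap_op_def Eop_def by (rule matrix_mult_sum_scaleR) simp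
    then show ?thesis by (simp add: trace_pair_def trace_transpose_sum_mult)
  qed
  finally show ?thesis .
qed

lemma trace_pair_funpow: "trace_pair Y ((moment_op p M ^^ t) X) = trace_pair ((lyap_op p M ^^ t) Y) X"
proof (induction t arbitrary: Y)
  case (Suc t)
  have "trace_pair Y ((moment_op p M ^^ Suc t) X) = trace_pair (lyap_op p M Y) ((moment_op p M ^^ t) X)"
    by (simp add: trace_pair_moment_op)
  also have "\<dots> = trace_pair ((lyap_op p M ^^ Suc t) Y) X"
    by (simp add: Suc.IH funpow_Suc_right del: funpow.simps)
  finally show ?case .
qed simp

lemma trace_pair_outer_prod:
  "trace_pair (\<lambda>i. if i = j then (\<chi> r s. a$r * b$s) else 0) X = inner a (X j *v b)"
proof -
  have "trace_pair (\<lambda>i. if i = j then (\<chi> r s. a$r * b$s) else 0) X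
      = (\<Sum>k\<in>UNIV. \<Sum>l\<in>UNIV. a$l * (X j$l$k * b$k))"
    by (simp add: trace_pair_def trace_transpose_mult if_distrib if_distribR mult_ac cong: if_cong)
  also have "\<dots> = inner a (X j *v b)"
    by (subst sum.swap) (simp add: inner_vec_def matrix_vector_mult_def sum_distrib_left)
  finally show ?thesis .
qed

lemma tendsto_trace_pair_0:
  assumes "\<And>i. (\<lambda>t. W t i) \<longlonglongrightarrow> 0"
  shows "(\<lambda>t. trace_pair (W t) X) \<longlonglongrightarrow> 0"
  unfolding trace_pair_def trace_transpose_mult
  by (intro tendsto_null_sum tendsto_mult_left_zero tendsto_vec_nth[where a=0, simplified] assms)

section \<open>Mean-square stability in terms of the Lyapunov operator\<close>

lemma lyap_iter_inner_bound:
  assumes "\<forall>i j. 0 \<le> p i j"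
  shows "\<exists>C. \<forall>n i a b. \<bar>inner a ((lyap_op p M ^^ n) Y i *v b)\<bar>
           \<le> C * (inner a ((lyap_op p M ^^ n) (\<lambda>_. mat 1) i *v a)
                  + inner b ((lyap_op p M ^^ n) (\<lambda>_. mat 1) i *v b))"
proof -
  obtain C where C: "\<And>i a b. \<bar>inner a (Y i *v b)\<bar> \<le> C * (inner a a + inner b b)"
    using matrix_inner_bound[of Y] by blast
  have "\<bar>inner a ((lyap_op p M ^^ n) Y i *v b)\<bar>
      \<le> C * (inner a ((lyap_op p M ^^ n) (\<lambda>_. mat 1) i *v a)
             + inner b ((lyap_op p M ^^ n) (\<lambda>_. mat 1) i *v b))"
    for n i a b
  proof (induction n arbitrary: i a b)
    case 0
    then show ?case using C by simp
  next
    case (Suc n)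
    let ?Y = "(lyap_op p M ^^ n) Y" and ?I = "(lyap_op p M ^^ n) (\<lambda>_. mat 1)"
    have "\<bar>inner a ((lyap_op p M ^^ Suc n) Y i *v b)\<bar>
        \<le> (\<Sum>j\<in>UNIV. \<bar>p i j * inner (M i *v a) (?Y j *v (M i *v b))\<bar>)"
      by (simp add: inner_lyap_op sum_abs)
    also have "\<dots> \<le> (\<Sum>j\<in>UNIV. p i j * (C * (inner (M i *v a) (?I j *v (M i *v a))
                                        + inner (M i *v b) (?I j *v (M i *v b)))))"
      by (rule sum_mono) (simp add: abs_mult assms mult_left_mono Suc.IH)
    also have "\<dots> = C * (inner a ((lyap_op p M ^^ Suc n) (\<lambda>_. mat 1) i *v a)
                       + inner b ((lyap_op p M ^^ Suc n) (\<lambda>_. mat 1) i *v b))"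
      by (simp add: inner_lyap_op sum_distrib_left sum.distrib algebra_simps)
    finally show ?case .
  qed
  then show ?thesis by blast
qed

lemma lyap_decays_iter_tendsto_0:
  assumes "\<forall>i j. 0 \<le> p i j" and "lyap_decays p M"
  shows "(\<lambda>n. inner a ((lyap_op p M ^^ n) Y i *v b)) \<longlonglongrightarrow> 0"
proof -
  let ?I = "\<lambda>n. (lyap_op p M ^^ n) (\<lambda>_. mat 1) i"
  obtain C where C: "\<And>n. \<bar>inner a ((lyap_op p M ^^ n) Y i *v b)\<bar>
      \<le> C * (inner a (?I n *v a) + inner b (?I n *v b))"
    using lyap_iter_inner_bound[OF assms(1)] by blast
  show ?thesis
  proof (rule Lim_null_comparison)
    show "\<forall>\<^sub>F n in sequentially. norm (inner a ((lyap_op p M ^^ n) Y i *v b))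
        \<le> C * (inner a (?I n *v a) + inner b (?I n *v b))"
      using C by simp
    show "(\<lambda>n. C * (inner a (?I n *v a) + inner b (?I n *v b))) \<longlonglongrightarrow> 0"
      using assms(2) unfolding lyap_decays_def by (intro tendsto_mult_right_zero tendsto_add_zero) simp_all
  qed
qed

lemma ms_stable_imp_lyap_decays:
  fixes A :: "'m::finite \<Rightarrow> real^'d^'d" and B :: "'m \<Rightarrow> real^'k^'d" and K :: "'m \<Rightarrow> real^'d^'k"
  assumes "ms_stable p A B K"
  shows "lyap_decays p (Acl A B K)"
  unfolding lyap_decays_def
proof (intro allI)
  fix i :: 'm and a :: "real^'d"
  let ?M = "Acl A B K"
  let ?X0 = "\<lambda>j. if j = i then (\<chi> r s. a$r * a$s) else 0"
  have "inner a ((lyap_op p ?M ^^ n) (\<lambda>_. mat 1) i *v a) = trace (\<Sum>j\<in>UNIV. moment p A B K ?X0 n j)" for n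
  proof -
    have "inner a ((lyap_op p ?M ^^ n) (\<lambda>_. mat 1) i *v a) = trace_pair ((lyap_op p ?M ^^ n) (\<lambda>_. mat 1)) ?X0"
      by (simp add: trace_pair_outer_prod trace_pair_commute[of _ ?X0])
    also have "\<dots> = trace_pair (\<lambda>_. mat 1) ((moment_op p ?M ^^ n) ?X0)"
      by (rule trace_pair_funpow[symmetric])
    finally show ?thesis by (simp add: trace_pair_def trace_sum moment_eq_moment_op_iter)
  qed
  moreover have "(\<lambda>n. \<Sum>j\<in>UNIV. moment p A B K ?X0 n j) \<longlonglongrightarrow> 0"
    using assms unfolding ms_stable_def by (simp add: psd_outer_prod psd_0)
  ultimately show "(\<lambda>n. inner a ((lyap_op p ?M ^^ n) (\<lambda>_. mat 1) i *v a)) \<longlonglongrightarrow> 0"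
    by (simp add: tendsto_trace_0)
qed

lemma lyap_decays_imp_ms_stable:
  fixes A :: "'m::finite \<Rightarrow> real^'d^'d" and B :: "'m \<Rightarrow> real^'k^'d" and K :: "'m \<Rightarrow> real^'d^'k"
  assumes "\<forall>i j. 0 \<le> p i j" and "lyap_decays p (Acl A B K)"
  shows "ms_stable p A B K"
proof -
  have "(\<lambda>t. (moment_op p (Acl A B K) ^^ t) X0 j) \<longlonglongrightarrow> 0" for X0 j
  proof (rule matrix_tendsto_0_if_inner_tendsto_0)
    fix a b :: "real^'d"
    let ?Y = "\<lambda>i. if i = j then (\<chi> r s. a$r * b$s) else 0"
    have "(\<lambda>t. trace_pair ((lyap_op p (Acl A B K) ^^ t) ?Y) X0) \<longlonglongrightarrow> 0"
      by (intro tendsto_trace_pair_0 matrix_tendsto_0_if_inner_tendsto_0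
          lyap_decays_iter_tendsto_0[OF assms])
    moreover have "inner a ((moment_op p (Acl A B K) ^^ t) X0 j *v b)
        = trace_pair ((lyap_op p (Acl A B K) ^^ t) ?Y) X0" for t
      by (simp add: trace_pair_outer_prod[symmetric] trace_pair_funpow)
    ultimately show "(\<lambda>t. inner a ((moment_op p (Acl A B K) ^^ t) X0 j *v b)) \<longlonglongrightarrow> 0"
      by simp
  qed
  then show ?thesis
    unfolding ms_stable_def moment_eq_moment_op_iter by (intro allI impI tendsto_null_sum)
qed

section \<open>The coupled Lyapunov equation\<close>

lemma lyap_fixed_point_eq_0:
  assumes "\<forall>i j. 0 \<le> p i j" and "lyap_decays p M" and "\<And>i. lyap_op p M D i = D i"
  shows "D = (\<lambda>_. 0)"
proof -
  have "lyap_op p M D = D" using assms(3) by (rule ext)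
  then have iter: "(lyap_op p M ^^ n) D = D" for n by (induction n) simp_all
  have "(\<lambda>n. inner a ((lyap_op p M ^^ n) D i *v b)) \<longlonglongrightarrow> 0" for i a b
    by (rule lyap_decays_iter_tendsto_0[OF assms(1,2)])
  then have "inner a (D i *v b) = 0" for i a b
    by (simp add: iter LIMSEQ_const_iff)
  then show ?thesis by (intro ext matrix_eq_0_if_inner_eq_0)
qed

lemma lyap_eq_unique:
  assumes "\<forall>i j. 0 \<le> p i j" and "lyap_decays p M"
    and "\<And>i. P1 i = C i + lyap_op p M P1 i" and "\<And>i. P2 i = C i + lyap_op p M P2 i"
  shows "P1 = P2"
proof -
  have "(\<lambda>j. P1 j - P2 j) = (\<lambda>_. 0)"
  proof (rule lyap_fixed_point_eq_0[OF assms(1,2)])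
    fix i show "lyap_op p M (\<lambda>j. P1 j - P2 j) i = P1 i - P2 i"
      using assms(3)[of i] assms(4)[of i] by (simp add: lyap_op_diff algebra_simps)
  qed
  then show ?thesis by (simp add: fun_eq_iff)
qed

text \<open>On the finite-dimensional space of tuples, \<open>id - lyap_op p M\<close> is injective by
\<open>lyap_fixed_point_eq_0\<close>, hence surjective.\<close>

lemma lyap_eq_exists:
  fixes M :: "'m::finite \<Rightarrow> real^'n^'n"
  assumes "\<forall>i j. 0 \<le> p i j" and "lyap_decays p M"
  shows "\<exists>P. \<forall>i. P i = C i + lyap_op p M P i"
proof -
  define L :: "(real^'n^'n)^'m \<Rightarrow> (real^'n^'n)^'m" where
    "L v = (\<chi> i. v$i - lyap_op p M (\<lambda>j. v$j) i)" for v
  have "linear L"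
    by (rule linearI) (simp_all add: L_def vec_eq_iff lyap_op_add lyap_op_scaleR algebra_simps)
  moreover have "inj L"
  proof (rule injI)
    fix v w assume "L v = L w"
    then have "(\<lambda>j. v$j - w$j) = (\<lambda>_. 0)"
      using assms by (intro lyap_fixed_point_eq_0) (auto simp: L_def vec_eq_iff lyap_op_diff algebra_simps)
    then show "v = w" by (simp add: vec_eq_iff fun_eq_iff)
  qed
  ultimately have "surj L" by (rule eucl.linear_injective_imp_surjective[OF _ _ refl])
  then obtain v where "L v = (\<chi> i. C i)" by (metis surjD)
  then have "\<forall>i. v$i = C i + lyap_op p M (\<lambda>j. v$j) i"
    by (simp add: L_def vec_eq_iff algebra_simps)
  then show ?thesis by blast
qed

lemma lyap_iter_le:
  assumes "\<forall>i j. 0 \<le> p i j" and "\<And>i a. 0 \<le> inner a (C i *v a)"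
    and "\<And>i. P i = C i + lyap_op p M P i"
  shows "inner a ((lyap_op p M ^^ n) P i *v a) \<le> inner a (P i *v a)"
proof (induction n arbitrary: i a)
  case (Suc n)
  have "inner a ((lyap_op p M ^^ Suc n) P i *v a)
      = (\<Sum>j\<in>UNIV. p i j * inner (M i *v a) ((lyap_op p M ^^ n) P j *v (M i *v a)))"
    by (simp add: inner_lyap_op)
  also have "\<dots> \<le> (\<Sum>j\<in>UNIV. p i j * inner (M i *v a) (P j *v (M i *v a)))"
    by (rule sum_mono) (simp add: assms(1) mult_left_mono Suc.IH)
  also have "\<dots> = inner a (P i *v a) - inner a (C i *v a)"
    using arg_cong[OF assms(3)[of i], of "\<lambda>X. inner a (X *v a)"]
    by (simp add: inner_lyap_op matrix_vector_mult_add_rdistrib inner_add_right)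
  also have "\<dots> \<le> inner a (P i *v a)" using assms(2)[of a i] by simp
  finally show ?case .
qed simp

lemma PK_eqI:
  assumes "\<forall>i j. 0 \<le> p i j" and "lyap_decays p (Acl A B K)"
    and "\<And>i. P i = Q i + transpose (K i) ** R i ** K i + lyap_op p (Acl A B K) P i"
  shows "PK p A B Q R K = P"
  unfolding PK_def
proof (rule the_equality)
  show "\<forall>i. P i = Q i + transpose (K i) ** R i ** K i + transpose (Acl A B K i) ** Eop p P i ** Acl A B K i"
    using assms(3) by (simp add: lyap_op_def)
next
  fix P' assume "\<forall>i. P' i = Q i + transpose (K i) ** R i ** K i + transpose (Acl A B K i) ** Eop p P' i ** Acl A B K i"
  then show "P' = P"
    using assms by (intro lyap_eq_unique[OF assms(1,2)]) (simp_all add: lyap_op_def add.assoc)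
qed

lemma PK_lyap_eq:
  assumes "\<forall>i j. 0 \<le> p i j" and "lyap_decays p (Acl A B K)"
  shows "PK p A B Q R K i = Q i + transpose (K i) ** R i ** K i + lyap_op p (Acl A B K) (PK p A B Q R K) i"
proof -
  obtain P where "\<forall>i. P i = (Q i + transpose (K i) ** R i ** K i) + lyap_op p (Acl A B K) P i"
    using lyap_eq_exists[OF assms, where C = "\<lambda>i. Q i + transpose (K i) ** R i ** K i"] by blast
  moreover from this have "PK p A B Q R K = P" by (intro PK_eqI[OF assms]) simp
  ultimately show ?thesis by simp
qed

lemma psd_PK:
  assumes "\<forall>i j. 0 \<le> p i j" and "lyap_decays p (Acl A B K)"
    and "\<forall>i. psd (Q i)" and "\<forall>i. psd (R i)"
  shows "psd (PK p A B Q R K i)"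
proof -
  let ?M = "Acl A B K" and ?P = "PK p A B Q R K"
  define C where "C i = Q i + transpose (K i) ** R i ** K i" for i
  have C: "psd (C i)" for i
    using assms(3,4) by (simp add: C_def psd_add psd_congruence)
  have P: "?P i = C i + lyap_op p ?M ?P i" for i
    unfolding C_def by (rule PK_lyap_eq[OF assms(1,2)])
  have "(\<lambda>i. transpose (?P i)) = ?P"
  proof (rule lyap_eq_unique[OF assms(1,2) _ P])
    fix i show "transpose (?P i) = C i + lyap_op p ?M (\<lambda>i. transpose (?P i)) i"
      using arg_cong[OF P[of i], of transpose] C[of i]
      by (simp add: transpose_add transpose_lyap_op psd_def)
  qed
  moreover have "0 \<le> inner a (?P i *v a)" for a
  proof (rule Lim_bounded)
    show "(\<lambda>n. inner a ((lyap_op p ?M ^^ n) ?P i *v a)) \<longlonglongrightarrow> 0"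
      by (rule lyap_decays_iter_tendsto_0[OF assms(1,2)])
    show "\<forall>n\<ge>0. inner a ((lyap_op p ?M ^^ n) ?P i *v a) \<le> inner a (?P i *v a)"
      using C by (auto simp: psd_def intro: lyap_iter_le[OF assms(1) _ P])
  qed
  ultimately show ?thesis by (metis psd_def)
qed

section \<open>A Gauss--Newton step decreases the Lyapunov function\<close>

definition gauss_newton_gain :: "('m::finite \<Rightarrow> 'm \<Rightarrow> real) \<Rightarrow> ('m \<Rightarrow> real^'d^'d) \<Rightarrow> ('m \<Rightarrow> real^'k^'d)
    \<Rightarrow> ('m \<Rightarrow> real^'k^'k) \<Rightarrow> ('m \<Rightarrow> real^'d^'d) \<Rightarrow> ('m \<Rightarrow> real^'d^'k) \<Rightarrow> real \<Rightarrow> 'm \<Rightarrow> real^'d^'k" where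
  "gauss_newton_gain p A B R P K \<eta> i =
     K i - (2 * \<eta>) *\<^sub>R (matrix_inv (R i + transpose (B i) ** Eop p P i ** B i)
       ** ((R i + transpose (B i) ** Eop p P i ** B i) ** K i - transpose (B i) ** Eop p P i ** A i))"

lemma completing_square:
  fixes R :: "real^'k^'k" and E :: "real^'d^'d" and B :: "real^'k^'d"
  defines "G \<equiv> R + transpose B ** E ** B"
  assumes "transpose R = R" and "transpose E = E" and "G *v y = transpose B *v (E *v w)"
  shows "inner u (R *v u) + inner (w - B *v u) (E *v (w - B *v u))
       = inner (u - y) (G *v (u - y)) - inner y (G *v y) + inner w (E *v w)"
proof -
  have G: "inner x (G *v v) = inner x (R *v v) + inner (B *v x) (E *v (B *v v))" for x v
    by (simp add: G_def matrix_vector_mult_add_rdistrib inner_add_right inner_transpose_sandwich)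
  have "inner (u - y) (G *v (u - y)) = inner u (G *v u) - 2 * inner u (G *v y) + inner y (G *v y)"
    using G[of y u] G[of u y] inner_symmetric_matrix[OF assms(2), of y u]
      inner_symmetric_matrix[OF assms(3), of "B *v y" "B *v u"]
    by (simp add: matrix_vector_mult_diff_distrib inner_diff_left inner_diff_right)
  moreover have "inner (w - B *v u) (E *v (w - B *v u))
      = inner w (E *v w) - 2 * inner (B *v u) (E *v w) + inner (B *v u) (E *v (B *v u))"
    using inner_symmetric_matrix[OF assms(3), of w "B *v u"]
    by (simp add: matrix_vector_mult_diff_distrib inner_diff_left inner_diff_right)
  moreover have "inner u (G *v y) = inner (B *v u) (E *v w)"
    using assms(4) by (simp add: inner_transpose_matrix_vector del: transpose_matrix_vector)
  ultimately show ?thesis using G[of u u] by linarith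
qed

lemma quadratic_cost_contraction_le:
  fixes R :: "real^'k^'k" and E :: "real^'d^'d" and B :: "real^'k^'d"
  assumes "psd R" and "psd E" and "(R + transpose B ** E ** B) *v y = transpose B *v (E *v w)"
    and "x' - y = t *\<^sub>R (x - y)" and "\<bar>t\<bar> \<le> 1"
  shows "inner x' (R *v x') + inner (w - B *v x') (E *v (w - B *v x'))
       \<le> inner x (R *v x) + inner (w - B *v x) (E *v (w - B *v x))"
proof -
  let ?G = "R + transpose B ** E ** B"
  have "psd ?G" using assms(1,2) by (intro psd_add psd_congruence)
  have "inner (x' - y) (?G *v (x' - y)) = t\<^sup>2 * inner (x - y) (?G *v (x - y))"
    by (simp add: assms(4) matrix_vector_mult_scaleR power2_eq_square)
  also have "\<dots> \<le> inner (x - y) (?G *v (x - y))"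
    using \<open>psd ?G\<close> assms(5) by (simp add: psd_def mult_left_le_one_le abs_square_le_1)
  finally show ?thesis
    using assms(1-3) by (simp add: psd_def completing_square)
qed

lemma lyap_op_gauss_newton_le:
  fixes A :: "'m::finite \<Rightarrow> real^'d^'d" and B :: "'m \<Rightarrow> real^'k^'d" and K :: "'m \<Rightarrow> real^'d^'k"
  assumes "\<forall>i j. 0 \<le> p i j" and "pd (R i)" and "\<forall>j. psd (P j)"
    and "P i = Q i + transpose (K i) ** R i ** K i + lyap_op p (Acl A B K) P i"
    and "0 \<le> \<eta>" and "\<eta> \<le> 1"
  shows "inner a (lyap_op p (Acl A B (gauss_newton_gain p A B R P K \<eta>)) P i *v a)
         \<le> inner a (P i *v a) - inner a (Q i *v a)"
proof -
  define E where "E = Eop p P i"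
  define G where "G = R i + transpose (B i) ** E ** B i"
  define w where "w = A i *v a"
  define x where "x = K i *v a"
  define x' where "x' = gauss_newton_gain p A B R P K \<eta> i *v a"
  define y where "y = matrix_inv G *v (transpose (B i) *v (E *v w))"
  have "psd E" unfolding E_def using assms(1,3) by (rule psd_Eop)
  have "pd G" unfolding G_def using assms(2) \<open>psd E\<close> by (intro pd_add_psd psd_congruence)
  have Gy: "G *v y = transpose (B i) *v (E *v w)"
    using pd_invertible(1)[OF \<open>pd G\<close>]
    by (simp add: y_def matrix_vector_mul_assoc matrix_mul_assoc del: transpose_matrix_vector)
  have "gauss_newton_gain p A B R P K \<eta> i
      = K i - (2 * \<eta>) *\<^sub>R (matrix_inv G ** (G ** K i - transpose (B i) ** E ** A i))"
    by (simp add: gauss_newton_gain_def G_def E_def)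
  then have "x' = x - (2 * \<eta>) *\<^sub>R (matrix_inv G *v (G *v x) - y)"
    by (simp add: x'_def x_def y_def w_def matrix_vector_mult_diff_rdistrib matrix_vector_mult_diff_distrib
        scaleR_matrix_vector_assoc[symmetric] matrix_vector_mul_assoc[symmetric])
  \<comment> \<open>\<open>y\<close> minimises the mode-\<open>i\<close> cost, and the step moves \<open>K i *v a\<close> towards it\<close>
  then have step: "x' - y = (1 - 2 * \<eta>) *\<^sub>R (x - y)"
    using pd_invertible(2)[OF \<open>pd G\<close>] by (simp add: matrix_vector_mul_assoc algebra_simps)
  have "Acl A B (gauss_newton_gain p A B R P K \<eta>) i *v a = w - B i *v x'"
    and "Acl A B K i *v a = w - B i *v x"
    by (simp_all add: Acl_def w_def x_def x'_def matrix_vector_mult_diff_rdistrib matrix_vector_mul_assoc)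
  then have new: "inner a (lyap_op p (Acl A B (gauss_newton_gain p A B R P K \<eta>)) P i *v a)
      = inner (w - B i *v x') (E *v (w - B i *v x'))"
    and old: "inner a (P i *v a) - inner a (Q i *v a) = inner x (R i *v x) + inner (w - B i *v x) (E *v (w - B i *v x))"
    using arg_cong[OF assms(4), of "\<lambda>X. inner a (X *v a)"]
    by (simp_all add: lyap_op_def inner_transpose_sandwich E_def x_def
        matrix_vector_mult_add_rdistrib inner_add_right)
  have "inner x' (R i *v x') + inner (w - B i *v x') (E *v (w - B i *v x'))
      \<le> inner x (R i *v x) + inner (w - B i *v x) (E *v (w - B i *v x))"
    using assms(5,6) Gy pd_imp_psd[OF assms(2)] \<open>psd E\<close> step
    by (intro quadratic_cost_contraction_le[where y = y and t = "1 - 2 * \<eta>"]) (simp_all add: G_def)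
  moreover have "0 \<le> inner x' (R i *v x')" using pd_imp_psd[OF assms(2)] by (simp add: psd_def)
  ultimately show ?thesis using new old by linarith
qed

section \<open>A Lyapunov inequality forces decay\<close>

lemma lyap_iter_le_geometric:
  assumes "\<forall>i j. 0 \<le> p i j" and "0 \<le> c" and "0 \<le> r"
    and "\<And>i a. inner a a \<le> c * inner a (P i *v a)"
    and "\<And>i a. inner a (lyap_op p M P i *v a) \<le> r * inner a (P i *v a)"
  shows "inner a ((lyap_op p M ^^ n) (\<lambda>_. mat 1) i *v a) \<le> c * r^n * inner a (P i *v a)"
proof (induction n arbitrary: i a)
  case 0
  then show ?case using assms(4) by simp
next
  case (Suc n)
  have "inner a ((lyap_op p M ^^ Suc n) (\<lambda>_. mat 1) i *v a)
      = (\<Sum>j\<in>UNIV. p i j * inner (M i *v a) ((lyap_op p M ^^ n) (\<lambda>_. mat 1) j *v (M i *v a)))"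
    by (simp add: inner_lyap_op)
  also have "\<dots> \<le> (\<Sum>j\<in>UNIV. p i j * (c * r^n * inner (M i *v a) (P j *v (M i *v a))))"
    by (rule sum_mono, rule mult_left_mono[OF Suc.IH]) (simp add: assms(1))
  also have "\<dots> = c * r^n * inner a (lyap_op p M P i *v a)"
    by (simp add: inner_lyap_op sum_distrib_left mult_ac)
  also have "\<dots> \<le> c * r^n * (r * inner a (P i *v a))"
    using assms(2,3,5) by (simp add: mult_left_mono)
  finally show ?case by (simp add: mult_ac)
qed

lemma lyap_ineq_contraction:
  assumes "\<forall>i j. 0 \<le> p i j" and "\<forall>i. pd (Q i)" and "\<forall>i. psd (P i)"
    and "\<And>i a. inner a (lyap_op p M P i *v a) \<le> inner a (P i *v a) - inner a (Q i *v a)"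
  obtains c r where "0 \<le> c" and "0 \<le> r" and "r < 1"
    and "\<And>i a. inner a a \<le> c * inner a (P i *v a)"
    and "\<And>i a. inner a (lyap_op p M P i *v a) \<le> r * inner a (P i *v a)"
proof -
  obtain q where q: "q > 0" "\<And>i a. q * inner a a \<le> inner a (Q i *v a)"
    using pd_uniform_lower_bound[OF assms(2)] by blast
  obtain C where "C \<ge> 0" and C: "\<And>i a b. \<bar>inner a (P i *v b)\<bar> \<le> C * (inner a a + inner b b)"
    using matrix_inner_bound[of P] by blast
  define b where "b = 2 * C + 1"
  have "b > 0" using \<open>C \<ge> 0\<close> by (simp add: b_def)
  have P_upper: "inner a (P i *v a) \<le> b * inner a a" for i a
  proof -
    have "inner a (P i *v a) \<le> C * (inner a a + inner a a)" using C[of a i a] by linarith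
    also have "\<dots> \<le> b * inner a a"
      using \<open>C \<ge> 0\<close> inner_ge_zero[of a] by (simp add: b_def algebra_simps)
    finally show ?thesis .
  qed
  define r where "r = max 0 (1 - q / b)"
  have "0 \<le> r" and "r < 1" using q(1) \<open>b > 0\<close> by (auto simp: r_def)
  have "inner a (lyap_op p M P i *v a) \<le> r * inner a (P i *v a)" for i a
  proof -
    have "(q / b) * inner a (P i *v a) \<le> (q / b) * (b * inner a a)"
      using P_upper[of a i] by (rule mult_left_mono) (use q(1) \<open>b > 0\<close> in simp)
    also have "\<dots> \<le> inner a (Q i *v a)" using q(2)[of a i] \<open>b > 0\<close> by simp
    finally have "(q / b) * inner a (P i *v a) \<le> inner a (Q i *v a)" .
    then have "inner a (lyap_op p M P i *v a) \<le> (1 - q / b) * inner a (P i *v a)"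
      using assms(4)[of a i] by (simp add: algebra_simps)
    also have "\<dots> \<le> r * inner a (P i *v a)"
      using assms(3) by (simp add: r_def psd_def mult_right_mono)
    finally show ?thesis .
  qed
  moreover have "inner a a \<le> (1 / q) * inner a (P i *v a)" for i a
  proof -
    have "0 \<le> inner a (lyap_op p M P i *v a)"
      using psd_lyap_op[OF assms(1,3)] by (simp add: psd_def)
    then have "q * inner a a \<le> inner a (P i *v a)" using q(2)[of a i] assms(4)[of a i] by linarith
    then show ?thesis using q(1) by (simp add: field_simps)
  qed
  moreover have "0 \<le> 1 / q" using q(1) by simp
  ultimately show thesis using that \<open>0 \<le> r\<close> \<open>r < 1\<close> by blast
qed

lemma lyap_decays_if_lyap_ineq:
  assumes "\<forall>i j. 0 \<le> p i j" and "\<forall>i. pd (Q i)" and "\<forall>i. psd (P i)"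
    and "\<And>i a. inner a (lyap_op p M P i *v a) \<le> inner a (P i *v a) - inner a (Q i *v a)"
  shows "lyap_decays p M"
  unfolding lyap_decays_def
proof (intro allI)
  fix i a
  obtain c r where "0 \<le> c" "0 \<le> r" "r < 1" and P_lower: "\<And>i a. inner a a \<le> c * inner a (P i *v a)"
    and contraction: "\<And>i a. inner a (lyap_op p M P i *v a) \<le> r * inner a (P i *v a)"
    using lyap_ineq_contraction[OF assms] by blast
  let ?I = "\<lambda>n. (lyap_op p M ^^ n) (\<lambda>_. mat 1) i"
  have "psd ((lyap_op p M ^^ n) (\<lambda>_. mat 1) j)" for n j
    by (induction n arbitrary: j) (simp_all add: psd_mat_1 psd_lyap_op assms(1))
  then have "norm (inner a (?I n *v a)) \<le> c * r^n * inner a (P i *v a)" for n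
    using lyap_iter_le_geometric[OF assms(1) \<open>0 \<le> c\<close> \<open>0 \<le> r\<close> P_lower contraction]
    by (simp add: psd_def)
  moreover have "(\<lambda>n. c * r^n * inner a (P i *v a)) \<longlonglongrightarrow> 0"
    using \<open>0 \<le> r\<close> \<open>r < 1\<close> by (intro tendsto_mult_left_zero tendsto_mult_right_zero LIMSEQ_realpow_zero)
  ultimately show "(\<lambda>n. inner a (?I n *v a)) \<longlonglongrightarrow> 0"
    by (rule Lim_null_comparison[OF always_eventually, OF allI])
qed

theorem lemma6:
  fixes p :: "'m::finite \<Rightarrow> 'm \<Rightarrow> real"
    and A :: "'m \<Rightarrow> real^'d^'d" and B :: "'m \<Rightarrow> real^'k^'d"
    and Q :: "'m \<Rightarrow> real^'d^'d" and R :: "'m \<Rightarrow> real^'k^'k"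
    and K :: "'m \<Rightarrow> real^'d^'k" and \<eta> :: real
  assumes "stochastic p"
    and "\<exists>K0. ms_stable p A B K0"
    and "\<forall>i. pd (Q i)" and "\<forall>i. pd (R i)"
    and "ms_stable p A B K"
    and "0 < \<eta>" and "\<eta> \<le> 1/2"
  shows "ms_stable p A B (\<lambda>i. K i - (2 * \<eta>) *\<^sub>R
           (matrix_inv (R i + transpose (B i) ** Eop p (PK p A B Q R K) i ** B i)
            ** LK p A B Q R K i))"
proof -
  have p: "\<forall>i j. 0 \<le> p i j" using \<open>stochastic p\<close> by (simp add: stochastic_def)
  let ?P = "PK p A B Q R K"
  let ?K' = "gauss_newton_gain p A B R ?P K \<eta>"
  have decays: "lyap_decays p (Acl A B K)"
    using \<open>ms_stable p A B K\<close> by (rule ms_stable_imp_lyap_decays)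
  have "\<forall>i. psd (?P i)"
    using assms(3,4) by (simp add: psd_PK[OF p decays] pd_imp_psd)
  moreover have "inner a (lyap_op p (Acl A B ?K') ?P i *v a) \<le> inner a (?P i *v a) - inner a (Q i *v a)" for i a
    using assms(4,6,7) \<open>\<forall>i. psd (?P i)\<close>
    by (intro lyap_op_gauss_newton_le[OF p] PK_lyap_eq[OF p decays]) simp_all
  ultimately have "lyap_decays p (Acl A B ?K')"
    using p assms(3) by (intro lyap_decays_if_lyap_ineq)
  then have "ms_stable p A B ?K'"
    by (rule lyap_decays_imp_ms_stable[OF p])
  then show ?thesis by (simp add: gauss_newton_gain_def[abs_def] LK_def)
qed

end
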